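(* For arbitrary real $b_1,\dots,b_s,c_1,\dots,c_s$, the polynomials $v_{i_1,\dots,i_k}=v_{i_1,\dots,i_k}(b_1,c_1,\dots,b_s,c_s)$ satisfy, for all multi-indices $(i_1,\dots,i_n)$ and $(i_{n+1},\dots,i_{n+m})$ of positive integers, $$v_{i_1,\dots,i_n}\,v_{i_{n+1},\dots,i_{n+m}}=\sum_{\sigma\in\mathrm{Sh}(n,m)}v_{i_{\sigma(1)},\dots,i_{\sigma(n+m)}}.$$ The same identities hold for the coefficients $\frac1{(i_1+\cdots+i_k)\cdots(i_1+i_2)i_1}$.
   Context: $v_{i_1,\dots,i_k}=\sum_{1\le j_1\le\cdots\le j_k\le s}\frac{b_{j_1}\cdots b_{j_k}}{\sigma(j_1,\dots,j_k)}c_{j_1}^{i_1-1}\cdots c_{j_k}^{i_k-1}$, where $\sigma(j_1,\dots,j_k)=1$ if $j_1<\cdots<j_k$ and $\sigma(j_1,\dots,j_k)=\ell!\,\sigma(j_{\ell+1},\dots,j_k)$ if $j_1=\cdots=j_\ell<j_{\ell+1}\le\cdots\le j_k$. $\mathrm{Sh}(n,m)$ is the set of the $(n+m)!/(n!m!)$ permutations $\sigma$ of $(1,\dots,n+m)$ obtained by interleaving $(1,\dots,n)$ and $(n+1,\dots,n+m)$ while preserving their respective orders. *)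

theory Defs
  imports Complex_Main "HOL-Combinatorics.Permutations"
begin

function sigma_fac :: "nat list \<Rightarrow> nat" where
  "sigma_fac [] = 1"
| "sigma_fac (x # xs) =
     fact (length (takeWhile (\<lambda>y. y = x) (x # xs))) * sigma_fac (dropWhile (\<lambda>y. y = x) xs)"
  by pat_completeness auto
termination
  by (relation "measure length") (auto simp: le_imp_less_Suc length_dropWhile_le)

definition incr_words :: "nat \<Rightarrow> nat \<Rightarrow> nat list set" where
  "incr_words s k = {j. length j = k \<and> sorted j \<and> set j \<subseteq> {1..s}}"

definition vpoly :: "(nat \<Rightarrow> real) \<Rightarrow> (nat \<Rightarrow> real) \<Rightarrow> nat \<Rightarrow> nat list \<Rightarrow> real" where
  "vpoly b c s i =
     (\<Sum>j\<in>incr_words s (length i).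
        (\<Prod>l<length i. b (j ! l)) / real (sigma_fac j) * (\<Prod>l<length i. c (j ! l) ^ (i ! l - 1)))"

definition wcoef :: "nat list \<Rightarrow> real" where
  "wcoef i = 1 / (\<Prod>l<length i. real (\<Sum>t\<le>l. i ! t))"

text \<open>Sh(n,m), with positions and values 0-based: permutations sigma of {0..<n+m}
  such that, read as the word (sigma 0, ..., sigma (n+m-1)), the letters 0..<n appear
  in increasing order and the letters n..<n+m appear in increasing order.\<close>
definition shuffles_perm :: "nat \<Rightarrow> nat \<Rightarrow> (nat \<Rightarrow> nat) set" where
  "shuffles_perm n m = {\<sigma>. \<sigma> permutes {0..<n+m} \<and>
      (\<forall>p q. p < q \<and> q < n + m \<and> \<sigma> p < n \<and> \<sigma> q < n \<longrightarrow> \<sigma> p < \<sigma> q) \<and>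
      (\<forall>p q. p < q \<and> q < n + m \<and> n \<le> \<sigma> p \<and> n \<le> \<sigma> q \<longrightarrow> \<sigma> p < \<sigma> q)}"

definition permute_word :: "(nat \<Rightarrow> nat) \<Rightarrow> nat list \<Rightarrow> nat list" where
  "permute_word \<sigma> w = map (\<lambda>p. w ! \<sigma> p) [0..<length w]"

end

theory Submission
  imports Defs
begin

text \<open>Call \<open>F\<close> shuffle-multiplicative if \<open>F x * F y\<close> is the sum of \<open>F z\<close> over all shuffles \<open>z\<close> of
  \<open>x\<close> and \<open>y\<close>, counted with multiplicity; the sum over \<open>Sh(n,m)\<close> in the theorem is exactly this
  shuffle sum. The counit and the exponential functions \<open>w \<mapsto> \<Prod>e(w\<^sub>l) / |w|!\<close> are
  shuffle-multiplicative, and so is the convolution \<open>(f * g)(w) = \<Sum> f(u) g(v)\<close>, summed over all splittings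
  \<open>w = u v\<close>, of two such functions, because deconcatenation is a morphism for the shuffle product. Splitting off the
  final block of letters \<open>s + 1\<close> of a weakly increasing index word shows that \<open>v\<close> for \<open>s + 1\<close>
  stages is the convolution of \<open>v\<close> for \<open>s\<close> stages with an exponential function, so induction
  on \<open>s\<close> handles \<open>v\<close>. For the coefficients, reading words backwards turns prefix sums into
  suffix sums; the first letter of a shuffle comes from one of the two words while the total
  letter sum \<open>S\<^sub>x + S\<^sub>y\<close> is shared, and the identity reduces to
  \<open>1 / (S\<^sub>x S\<^sub>y) = (1 / S\<^sub>x + 1 / S\<^sub>y) / (S\<^sub>x + S\<^sub>y)\<close>.\<close>

section \<open>Shuffle sums\<close>

fun shuffle_list :: "'a list \<Rightarrow> 'a list \<Rightarrow> 'a list list" where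
  "shuffle_list [] [] = [[]]"
| "shuffle_list [] (y # ys) = map ((#) y) (shuffle_list [] ys)"
| "shuffle_list (x # xs) [] = map ((#) x) (shuffle_list xs [])"
| "shuffle_list (x # xs) (y # ys) =
     map ((#) x) (shuffle_list xs (y # ys)) @ map ((#) y) (shuffle_list (x # xs) ys)"

definition shuffle_sum :: "('a list \<Rightarrow> 'b::comm_monoid_add) \<Rightarrow> 'a list \<Rightarrow> 'a list \<Rightarrow> 'b" where
  "shuffle_sum F xs ys = sum_list (map F (shuffle_list xs ys))"

lemma shuffle_list_Nil_left [simp]: "shuffle_list [] ys = [ys]"
  by (induction ys) auto

lemma shuffle_list_Nil_right [simp]: "shuffle_list xs [] = [xs]"
  by (induction xs) auto

lemma set_shuffle_list: "set (shuffle_list xs ys) = shuffles xs ys"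
  by (induction xs ys rule: shuffle_list.induct) simp_all

lemma length_shuffle_list: "length (shuffle_list xs ys) = (length xs + length ys) choose length xs"
  by (induction xs ys rule: shuffle_list.induct) simp_all

lemma distinct_shuffle_list:
  "distinct xs \<Longrightarrow> distinct ys \<Longrightarrow> set xs \<inter> set ys = {} \<Longrightarrow> distinct (shuffle_list xs ys)"
  by (induction xs ys rule: shuffle_list.induct)
    (auto simp: distinct_map set_shuffle_list dest: set_shuffles)

lemma shuffle_list_map: "shuffle_list (map g xs) (map g ys) = map (map g) (shuffle_list xs ys)"
  by (induction xs ys rule: shuffle_list.induct) simp_all

lemma shuffle_sum_Nil_Nil [simp]: "shuffle_sum F [] [] = F []"
  by (simp add: shuffle_sum_def)

lemma shuffle_sum_Cons_Nil: "shuffle_sum F (x # xs) [] = shuffle_sum (\<lambda>u. F (x # u)) xs []"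
  by (simp add: shuffle_sum_def)

lemma shuffle_sum_Nil_Cons: "shuffle_sum F [] (y # ys) = shuffle_sum (\<lambda>u. F (y # u)) [] ys"
  by (simp add: shuffle_sum_def)

lemma shuffle_sum_Cons_Cons:
  "shuffle_sum F (x # xs) (y # ys) =
     shuffle_sum (\<lambda>u. F (x # u)) xs (y # ys) + shuffle_sum (\<lambda>u. F (y # u)) (x # xs) ys"
  by (simp add: shuffle_sum_def o_def)

lemma shuffle_sum_add:
  "shuffle_sum (\<lambda>u. F u + G u) xs ys = shuffle_sum F xs ys + shuffle_sum G xs ys"
  by (simp add: shuffle_sum_def sum_list_addf)

lemma shuffle_sum_divide:
  "shuffle_sum (\<lambda>u. F u / c) xs ys = shuffle_sum F xs ys / (c :: 'b::field)"
  by (simp add: shuffle_sum_def divide_inverse sum_list_mult_const)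

lemma shuffle_sum_const:
  "shuffle_sum (\<lambda>_. a) xs ys = of_nat ((length xs + length ys) choose length xs) * (a :: 'b::semiring_1)"
  by (simp add: shuffle_sum_def sum_list_triv length_shuffle_list)

lemma shuffle_sum_cong:
  "(\<And>u. u \<in> shuffles xs ys \<Longrightarrow> F u = G u) \<Longrightarrow> shuffle_sum F xs ys = shuffle_sum G xs ys"
  unfolding shuffle_sum_def set_shuffle_list[symmetric] by (metis map_cong)

lemma shuffle_sum_map: "shuffle_sum F (map g xs) (map g ys) = shuffle_sum (\<lambda>z. F (map g z)) xs ys"
  by (simp add: shuffle_sum_def shuffle_list_map o_def)

lemma shuffle_sum_distinct:
  "distinct xs \<Longrightarrow> distinct ys \<Longrightarrow> set xs \<inter> set ys = {} \<Longrightarrow>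
     shuffle_sum F xs ys = (\<Sum>z\<in>shuffles xs ys. F z)"
  by (simp add: shuffle_sum_def sum_list_distinct_conv_sum_set distinct_shuffle_list set_shuffle_list)

text \<open>Shuffling the positions instead of the letters makes all shuffles distinct, so the
  multiplicities in \<^const>\<open>shuffle_sum\<close> become an ordinary sum over a set.\<close>

lemma map_nth_append_upt:
  "map ((!) (xs @ ys)) [0..<length xs] = xs"
  "map ((!) (xs @ ys)) [length xs..<length xs + length ys] = ys"
  by (rule nth_equalityI; simp add: nth_append)+

lemma shuffle_sum_eq_sum_index_shuffles:
  "shuffle_sum F xs ys =
     (\<Sum>z\<in>shuffles [0..<length xs] [length xs..<length xs + length ys]. F (map ((!) (xs @ ys)) z))"
proof -
  let ?n = "length xs" and ?m = "length ys"
  have "shuffle_sum F xs ys = shuffle_sum (\<lambda>z. F (map ((!) (xs @ ys)) z)) [0..<?n] [?n..<?n + ?m]"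
    by (metis shuffle_sum_map map_nth_append_upt)
  then show ?thesis by (simp add: shuffle_sum_distinct)
qed

lemma rev_in_shuffles_iff:
  assumes "set xs \<inter> set ys = {}"
  shows "rev zs \<in> shuffles xs ys \<longleftrightarrow> zs \<in> shuffles (rev xs) (rev ys)"
proof -
  have "shuffles xs ys = partition (\<lambda>x. x \<in> set xs) -` {(xs, ys)}"
    and "shuffles (rev xs) (rev ys) = partition (\<lambda>x. x \<in> set xs) -` {(rev xs, rev ys)}"
    using assms by (auto intro!: inv_image_partition[symmetric])
  then show ?thesis
    unfolding vimage_def by (simp add: rev_filter[symmetric] rev_swap o_def)
qed

lemma shuffle_sum_rev: "shuffle_sum F (rev xs) (rev ys) = shuffle_sum (\<lambda>z. F (rev z)) xs ys"
proof -
  let ?n = "length xs" and ?m = "length ys" and ?w = "(!) (xs @ ys)"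
  let ?A = "[0..<?n]" and ?B = "[?n..<?n + ?m]"
  have "shuffle_sum (\<lambda>z. F (rev z)) xs ys = (\<Sum>z\<in>shuffles ?A ?B. F (map ?w (rev z)))"
    by (simp add: shuffle_sum_eq_sum_index_shuffles rev_map)
  also have "\<dots> = (\<Sum>z\<in>shuffles (rev ?A) (rev ?B). F (map ?w z))"
    by (rule sum.reindex_bij_witness[where i = rev and j = rev])
      (simp_all add: rev_in_shuffles_iff[symmetric])
  also have "\<dots> = shuffle_sum (\<lambda>z. F (map ?w z)) (rev ?A) (rev ?B)"
    by (simp add: shuffle_sum_distinct)
  also have "\<dots> = shuffle_sum F (rev xs) (rev ys)"
    by (simp add: shuffle_sum_map[symmetric] rev_map[symmetric] map_nth_append_upt)
  finally show ?thesis ..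
qed

section \<open>Deconcatenation\<close>

fun deconcat_sum :: "('a list \<Rightarrow> 'a list \<Rightarrow> 'b::comm_monoid_add) \<Rightarrow> 'a list \<Rightarrow> 'b" where
  "deconcat_sum \<Phi> [] = \<Phi> [] []"
| "deconcat_sum \<Phi> (x # w) = \<Phi> [] (x # w) + deconcat_sum (\<lambda>u. \<Phi> (x # u)) w"

lemma deconcat_sum_eq_sum: "deconcat_sum \<Phi> w = (\<Sum>p\<le>length w. \<Phi> (take p w) (drop p w))"
  by (induction w arbitrary: \<Phi>) (simp_all add: sum.atMost_Suc_shift del: sum.atMost_Suc)

lemma deconcat_sum_add:
  "deconcat_sum (\<lambda>u v. \<Phi> u v + \<Psi> u v) w = deconcat_sum \<Phi> w + deconcat_sum \<Psi> w"
  by (simp add: deconcat_sum_eq_sum sum.distrib)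

lemma deconcat_sum_mult:
  "deconcat_sum \<Phi> xs * deconcat_sum \<Psi> ys =
     deconcat_sum (\<lambda>x1 x2. deconcat_sum (\<lambda>y1 y2. \<Phi> x1 x2 * \<Psi> y1 y2) ys) xs"
  for \<Phi> \<Psi> :: "'a list \<Rightarrow> 'a list \<Rightarrow> 'b::comm_semiring_1"
  by (simp add: deconcat_sum_eq_sum sum_product)

lemma deconcat_sum_cong:
  "(\<And>u v. u @ v = w \<Longrightarrow> \<Phi> u v = \<Psi> u v) \<Longrightarrow> deconcat_sum \<Phi> w = deconcat_sum \<Psi> w"
  by (simp add: deconcat_sum_eq_sum)

definition split_shuffle_sum ::
    "('a list \<Rightarrow> 'a list \<Rightarrow> 'b::comm_monoid_add) \<Rightarrow> 'a list \<Rightarrow> 'a list \<Rightarrow> 'b" where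
  "split_shuffle_sum \<Phi> xs ys = deconcat_sum (\<lambda>x1 x2. deconcat_sum (\<lambda>y1 y2.
       shuffle_sum (\<lambda>u. shuffle_sum (\<Phi> u) x2 y2) x1 y1) ys) xs"

lemma split_shuffle_sum_simps:
  "split_shuffle_sum \<Phi> [] [] = \<Phi> [] []"
  "split_shuffle_sum \<Phi> [] (y # ys) =
     shuffle_sum (\<Phi> []) [] (y # ys) + split_shuffle_sum (\<lambda>u. \<Phi> (y # u)) [] ys"
  "split_shuffle_sum \<Phi> (x # xs) [] =
     shuffle_sum (\<Phi> []) (x # xs) [] + split_shuffle_sum (\<lambda>u. \<Phi> (x # u)) xs []"
  "split_shuffle_sum \<Phi> (x # xs) (y # ys) = shuffle_sum (\<Phi> []) (x # xs) (y # ys)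
     + split_shuffle_sum (\<lambda>u. \<Phi> (x # u)) xs (y # ys) + split_shuffle_sum (\<lambda>u. \<Phi> (y # u)) (x # xs) ys"
  by (simp_all add: split_shuffle_sum_def shuffle_sum_Nil_Cons shuffle_sum_Cons_Cons shuffle_sum_Cons_Nil
      deconcat_sum_add algebra_simps)

lemma shuffle_sum_deconcat_sum_simps:
  "shuffle_sum (deconcat_sum \<Phi>) [] (y # ys) =
     shuffle_sum (\<Phi> []) [] (y # ys) + shuffle_sum (deconcat_sum (\<lambda>u. \<Phi> (y # u))) [] ys"
  "shuffle_sum (deconcat_sum \<Phi>) (x # xs) [] =
     shuffle_sum (\<Phi> []) (x # xs) [] + shuffle_sum (deconcat_sum (\<lambda>u. \<Phi> (x # u))) xs []"
  "shuffle_sum (deconcat_sum \<Phi>) (x # xs) (y # ys) = shuffle_sum (\<Phi> []) (x # xs) (y # ys)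
     + shuffle_sum (deconcat_sum (\<lambda>u. \<Phi> (x # u))) xs (y # ys)
     + shuffle_sum (deconcat_sum (\<lambda>u. \<Phi> (y # u))) (x # xs) ys"
  by (simp_all add: shuffle_sum_Nil_Cons shuffle_sum_Cons_Nil shuffle_sum_Cons_Cons shuffle_sum_add add_ac)

text \<open>Deconcatenation is a morphism for the shuffle product.\<close>

lemma shuffle_sum_deconcat_sum: "shuffle_sum (deconcat_sum \<Phi>) xs ys = split_shuffle_sum \<Phi> xs ys"
proof (induction "length xs + length ys" arbitrary: \<Phi> xs ys rule: less_induct)
  case less
  show ?case
    by (cases xs; cases ys)
      (simp_all add: less shuffle_sum_deconcat_sum_simps split_shuffle_sum_simps)
qed

section \<open>Shuffle-multiplicative functions\<close>

definition shuffle_multiplicative :: "'a set \<Rightarrow> ('a list \<Rightarrow> 'b::comm_semiring_1) \<Rightarrow> bool" where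
  "shuffle_multiplicative A F \<longleftrightarrow>
     (\<forall>xs ys. set xs \<subseteq> A \<longrightarrow> set ys \<subseteq> A \<longrightarrow> F xs * F ys = shuffle_sum F xs ys)"

definition convolution :: "('a list \<Rightarrow> 'b::comm_semiring_1) \<Rightarrow> ('a list \<Rightarrow> 'b) \<Rightarrow> 'a list \<Rightarrow> 'b" where
  "convolution f g = deconcat_sum (\<lambda>u v. f u * g v)"

lemma convolution_multiplicative:
  assumes f: "shuffle_multiplicative A f" and g: "shuffle_multiplicative A g"
  shows "shuffle_multiplicative A (convolution f g)"
  unfolding shuffle_multiplicative_def
proof (intro allI impI)
  fix xs ys assume xs: "set xs \<subseteq> A" and ys: "set ys \<subseteq> A"
  have "convolution f g xs * convolution f g ys =
      deconcat_sum (\<lambda>x1 x2. deconcat_sum (\<lambda>y1 y2. (f x1 * f y1) * (g x2 * g y2)) ys) xs"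
    by (simp add: convolution_def deconcat_sum_mult mult_ac)
  also have "\<dots> = deconcat_sum (\<lambda>x1 x2. deconcat_sum (\<lambda>y1 y2.
      shuffle_sum f x1 y1 * shuffle_sum g x2 y2) ys) xs"
  proof (intro deconcat_sum_cong)
    fix x1 x2 y1 y2 assume "x1 @ x2 = xs" "y1 @ y2 = ys"
    then show "f x1 * f y1 * (g x2 * g y2) = shuffle_sum f x1 y1 * shuffle_sum g x2 y2"
      using f g xs ys unfolding shuffle_multiplicative_def by auto
  qed
  also have "\<dots> = split_shuffle_sum (\<lambda>u v. f u * g v) xs ys"
    by (simp add: split_shuffle_sum_def shuffle_sum_def sum_list_const_mult sum_list_mult_const)
  also have "\<dots> = shuffle_sum (convolution f g) xs ys"
    by (simp add: shuffle_sum_deconcat_sum convolution_def)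
  finally show "convolution f g xs * convolution f g ys = shuffle_sum (convolution f g) xs ys" .
qed

definition counit :: "'a list \<Rightarrow> 'b::comm_semiring_1" where
  "counit w = (if w = [] then 1 else 0)"

lemma counit_multiplicative: "shuffle_multiplicative A counit"
  unfolding shuffle_multiplicative_def
proof (intro allI impI)
  fix xs ys :: "'a list"
  have "shuffle_sum counit xs ys = shuffle_sum (\<lambda>_. counit (xs @ ys)) xs ys"
    by (intro shuffle_sum_cong) (auto simp: counit_def dest: length_shuffles)
  also have "\<dots> = counit xs * counit ys"
    by (simp add: shuffle_sum_const counit_def)
  finally show "counit xs * counit ys = shuffle_sum counit xs ys" ..
qed

definition exp_character :: "('a \<Rightarrow> 'b::field_char_0) \<Rightarrow> 'a list \<Rightarrow> 'b" where
  "exp_character e w = prod_list (map e w) / fact (length w)"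

lemma prod_list_map_shuffles:
  "zs \<in> shuffles xs ys \<Longrightarrow> prod_list (map e zs) = prod_list (map e xs) * prod_list (map e ys)"
  for e :: "'a \<Rightarrow> 'b::comm_monoid_mult"
  by (induction xs ys arbitrary: zs rule: shuffles.induct) (auto simp: mult_ac)

lemma exp_character_multiplicative: "shuffle_multiplicative A (exp_character e)"
  unfolding shuffle_multiplicative_def
proof (intro allI impI)
  fix xs ys :: "'a list"
  let ?n = "length xs" and ?m = "length ys"
  have "shuffle_sum (exp_character e) xs ys =
      shuffle_sum (\<lambda>_. prod_list (map e xs) * prod_list (map e ys) / fact (?n + ?m)) xs ys"
    by (intro shuffle_sum_cong) (simp add: exp_character_def length_shuffles prod_list_map_shuffles)
  also have "\<dots> = exp_character e xs * exp_character e ys"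
    by (simp add: shuffle_sum_const exp_character_def binomial_fact)
  finally show "exp_character e xs * exp_character e ys = shuffle_sum (exp_character e) xs ys" ..
qed

lemma rev_multiplicative:
  assumes "shuffle_multiplicative A F"
  shows "shuffle_multiplicative A (\<lambda>w. F (rev w))"
  using assms by (auto simp: shuffle_multiplicative_def shuffle_sum_rev[symmetric])

section \<open>The polynomials \<open>v\<close>\<close>

lemma sigma_fac_pos: "sigma_fac j > 0"
  by (induction j rule: sigma_fac.induct) auto

lemma sigma_fac_replicate: "sigma_fac (replicate r d) = fact r"
  by (cases r) (simp_all add: takeWhile_replicate dropWhile_replicate)

lemma sigma_fac_append_replicate:
  "d \<notin> set j \<Longrightarrow> sigma_fac (j @ replicate r d) = sigma_fac j * fact r"
proof (induction j rule: sigma_fac.induct)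
  case 1
  then show ?case by (simp add: sigma_fac_replicate)
next
  case (2 x xs)
  have "d \<noteq> x" using "2.prems" by auto
  then have take_block: "takeWhile (\<lambda>y. y = x) (replicate r d) = []"
    and drop_block: "dropWhile (\<lambda>y. y = x) (replicate r d) = replicate r d"
    by (cases r; simp)+
  show ?case
  proof (cases "\<forall>y\<in>set xs. y = x")
    case True
    then have run: "takeWhile (\<lambda>y. y = x) xs = xs" "dropWhile (\<lambda>y. y = x) xs = []"
      by (simp_all add: takeWhile_eq_all_conv dropWhile_eq_Nil_conv)
    show ?thesis
      using True \<open>d \<noteq> x\<close> by (simp add: run take_block drop_block sigma_fac_replicate)
  next
    case False
    then obtain y where "y \<in> set xs" "y \<noteq> x" by blast
    then show ?thesis using 2 by (simp add: mult_ac) (metis set_dropWhileD)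
  qed
qed

lemma sorted_eq_append_replicate_Max:
  "sorted J \<Longrightarrow> set J \<subseteq> {..d} \<Longrightarrow> \<exists>j r. J = j @ replicate r d \<and> d \<notin> set j"
proof (induction J)
  case Nil
  show ?case by (intro exI[of _ "[]"] exI[of _ 0]) simp
next
  case (Cons x J)
  then obtain j r where J: "J = j @ replicate r d" "d \<notin> set j" by auto
  show ?case
  proof (cases "x = d")
    case True
    with Cons.prems J have "j = []" by (cases j) auto
    with J True show ?thesis by (intro exI[of _ "[]"] exI[of _ "Suc r"]) simp
  next
    case False
    with J show ?thesis by (intro exI[of _ "x # j"] exI[of _ r]) simp
  qed
qed

lemma finite_incr_words: "finite (incr_words s k)"
proof (rule finite_subset)
  show "incr_words s k \<subseteq> {j. set j \<subseteq> {1..s} \<and> length j = k}"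
    by (auto simp: incr_words_def)
qed (simp add: finite_lists_length_eq)

lemma incr_words_Suc:
  "incr_words (Suc s) k =
     (\<lambda>(p, j). j @ replicate (k - p) (Suc s)) ` (SIGMA p:{..k}. incr_words s p)"
proof (intro equalityI subsetI)
  fix J assume J: "J \<in> incr_words (Suc s) k"
  then have "sorted J" "set J \<subseteq> {..Suc s}" by (auto simp: incr_words_def)
  then obtain j r where jr: "J = j @ replicate r (Suc s)" "Suc s \<notin> set j"
    using sorted_eq_append_replicate_Max by blast
  with J have "set j \<subseteq> {1..s}"
    by (fastforce simp: incr_words_def le_Suc_eq)
  with J jr have "(length j, j) \<in> (SIGMA p:{..k}. incr_words s p)" "r = k - length j"
    by (auto simp: incr_words_def sorted_append)
  with jr show "J \<in> (\<lambda>(p, j). j @ replicate (k - p) (Suc s)) ` (SIGMA p:{..k}. incr_words s p)"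
    by force
qed (force simp: incr_words_def sorted_append subset_iff)

lemma inj_on_append_replicate:
  "inj_on (\<lambda>(p, j). j @ replicate (k - p) (Suc s)) (SIGMA p:{..k}. incr_words s p)"
proof (intro inj_onI, clarify)
  fix p1 j1 p2 j2
  assume in_words: "j1 \<in> incr_words s p1" "j2 \<in> incr_words s p2"
    and eq: "j1 @ replicate (k - p1) (Suc s) = j2 @ replicate (k - p2) (Suc s)"
  have "filter (\<lambda>x. x \<noteq> Suc s) (j1 @ replicate (k - p1) (Suc s)) = j1"
    "filter (\<lambda>x. x \<noteq> Suc s) (j2 @ replicate (k - p2) (Suc s)) = j2"
    using in_words by (auto simp: incr_words_def filter_id_conv)
  with eq have "j1 = j2" by simp
  with in_words show "p1 = p2 \<and> j1 = j2" by (simp add: incr_words_def)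
qed

lemma sum_incr_words_Suc:
  "(\<Sum>J\<in>incr_words (Suc s) k. G J) =
     (\<Sum>p\<le>k. \<Sum>j\<in>incr_words s p. G (j @ replicate (k - p) (Suc s)))"
proof -
  have "(\<Sum>J\<in>incr_words (Suc s) k. G J) =
      (\<Sum>(p, j)\<in>(SIGMA p:{..k}. incr_words s p). G (j @ replicate (k - p) (Suc s)))"
    unfolding incr_words_Suc sum.reindex[OF inj_on_append_replicate] by (simp add: case_prod_unfold)
  then show ?thesis
    by (simp add: sum.Sigma finite_incr_words)
qed

definition vterm :: "(nat \<Rightarrow> real) \<Rightarrow> (nat \<Rightarrow> real) \<Rightarrow> nat list \<Rightarrow> nat list \<Rightarrow> real" where
  "vterm b c j i =
     prod_list (map b j) / real (sigma_fac j) * prod_list (map2 (\<lambda>x y. c x ^ (y - 1)) j i)"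

lemma vpoly_eq_sum_vterm: "vpoly b c s i = (\<Sum>j\<in>incr_words s (length i). vterm b c j i)"
  unfolding vpoly_def vterm_def
  by (intro sum.cong refl) (simp add: incr_words_def prod.list_conv_set_nth atLeast0LessThan)

lemma prod_list_map_mult:
  "prod_list (map (\<lambda>x. f x * g x) xs) = prod_list (map f xs) * prod_list (map g xs)"
  for f g :: "'a \<Rightarrow> 'b::comm_monoid_mult"
  by (induction xs) (simp_all add: mult_ac)

lemma vterm_append_replicate:
  assumes "length j = p" "p \<le> length i" "d \<notin> set j"
  shows "vterm b c (j @ replicate (length i - p) d) i =
    vterm b c j (take p i) * exp_character (\<lambda>a. b d * c d ^ (a - 1)) (drop p i)"
proof -
  have "map2 (\<lambda>x y. c x ^ (y - 1)) (j @ replicate (length i - p) d) i =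
      map2 (\<lambda>x y. c x ^ (y - 1)) j (take p i) @ map (\<lambda>y. c d ^ (y - 1)) (drop p i)"
    using assms zip_append[of j "take p i" "replicate (length i - p) d" "drop p i"]
    by (simp add: zip_replicate1 map_zip_map)
  moreover have "real (sigma_fac j) \<noteq> 0" using sigma_fac_pos[of j] by simp
  ultimately show ?thesis
    using assms
    by (simp add: vterm_def exp_character_def sigma_fac_append_replicate prod_list_map_mult
        map_replicate_const)
qed

text \<open>The block of letters \<open>s + 1\<close> ending an index word contributes its factorial to
  \<^const>\<open>sigma_fac\<close>.\<close>

lemma vpoly_Suc:
  "vpoly b c (Suc s) = convolution (vpoly b c s) (exp_character (\<lambda>a. b (Suc s) * c (Suc s) ^ (a - 1)))"
proof
  fix i
  let ?E = "exp_character (\<lambda>a. b (Suc s) * c (Suc s) ^ (a - 1))"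
  have "vpoly b c (Suc s) i = (\<Sum>p\<le>length i. \<Sum>j\<in>incr_words s p.
          vterm b c (j @ replicate (length i - p) (Suc s)) i)"
    by (simp add: vpoly_eq_sum_vterm sum_incr_words_Suc)
  also have "\<dots> = (\<Sum>p\<le>length i. \<Sum>j\<in>incr_words s p. vterm b c j (take p i) * ?E (drop p i))"
    by (intro sum.cong refl vterm_append_replicate) (auto simp: incr_words_def)
  also have "\<dots> = (\<Sum>p\<le>length i. vpoly b c s (take p i) * ?E (drop p i))"
    by (simp add: vpoly_eq_sum_vterm sum_distrib_right min_absorb2)
  also have "\<dots> = convolution (vpoly b c s) ?E i"
    by (simp add: convolution_def deconcat_sum_eq_sum)
  finally show "vpoly b c (Suc s) i = convolution (vpoly b c s) ?E i" .
qed

lemma vpoly_0: "vpoly b c 0 = counit"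
proof
  fix i :: "nat list"
  have "incr_words 0 (length i) = (if i = [] then {[]} else {})"
    by (auto simp: incr_words_def)
  then show "vpoly b c 0 i = counit i"
    by (simp add: vpoly_def counit_def)
qed

lemma vpoly_multiplicative: "shuffle_multiplicative UNIV (vpoly b c s)"
  by (induction s)
    (simp_all add: vpoly_0 vpoly_Suc counit_multiplicative convolution_multiplicative
      exp_character_multiplicative)

section \<open>The coefficients \<^const>\<open>wcoef\<close>\<close>

lemma sum_list_shuffles: "zs \<in> shuffles xs ys \<Longrightarrow> sum_list zs = sum_list xs + sum_list ys"
  for zs :: "'a::comm_monoid_add list"
  by (induction xs ys arbitrary: zs rule: shuffles.induct) (auto simp: add_ac)

text \<open>\<^const>\<open>wcoef\<close> read backwards (see \<open>wcoef_eq_inv_suffix_sums_rev\<close>): its recursion peels off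
  the first letter, matching that of shuffles.\<close>

fun inv_suffix_sums :: "nat list \<Rightarrow> real" where
  "inv_suffix_sums [] = 1"
| "inv_suffix_sums (a # w) = inv_suffix_sums w / real (sum_list (a # w))"

lemma inv_suffix_sums_multiplicative: "shuffle_multiplicative {0<..} inv_suffix_sums"
  unfolding shuffle_multiplicative_def
proof (intro allI impI)
  fix xs ys :: "nat list"
  show "set xs \<subseteq> {0<..} \<Longrightarrow> set ys \<subseteq> {0<..} \<Longrightarrow>
    inv_suffix_sums xs * inv_suffix_sums ys = shuffle_sum inv_suffix_sums xs ys"
  proof (induction xs ys rule: shuffle_list.induct)
    case (4 x xs y ys)
    let ?W = inv_suffix_sums
    define Sx where "Sx = real (sum_list (x # xs))"
    define Sy where "Sy = real (sum_list (y # ys))"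
    have pos: "Sx > 0" "Sy > 0" using "4.prems" by (simp_all add: Sx_def Sy_def)
    have Cons: "?W (x # xs) = ?W xs / Sx" "?W (y # ys) = ?W ys / Sy"
      by (simp_all add: Sx_def Sy_def)
    have IH_left: "?W xs * ?W (y # ys) = shuffle_sum ?W xs (y # ys)"
      and IH_right: "?W (x # xs) * ?W ys = shuffle_sum ?W (x # xs) ys"
      using "4.IH" "4.prems" by simp_all
    have "shuffle_sum ?W (x # xs) (y # ys) =
        shuffle_sum (\<lambda>u. ?W u / (Sx + Sy)) xs (y # ys)
          + shuffle_sum (\<lambda>u. ?W u / (Sx + Sy)) (x # xs) ys"
      unfolding shuffle_sum_Cons_Cons
      by (intro arg_cong2[where f = "(+)"] shuffle_sum_cong)
        (auto simp: Sx_def Sy_def dest!: sum_list_shuffles)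
    also have "\<dots> = (?W xs * (?W ys / Sy) + ?W xs / Sx * ?W ys) / (Sx + Sy)"
      unfolding shuffle_sum_divide IH_left[symmetric] IH_right[symmetric] Cons
      by (rule add_divide_distrib[symmetric])
    also have "\<dots> = ?W xs / Sx * (?W ys / Sy)"
      using pos by (simp add: divide_simps) (simp add: algebra_simps)
    finally show ?case unfolding Cons by simp
  qed (simp_all add: shuffle_sum_def)
qed

lemma wcoef_snoc: "wcoef (w @ [a]) = wcoef w / real (a + sum_list w)"
proof -
  have prefixes:
    "(\<Prod>l<length w. real (\<Sum>t\<le>l. (w @ [a]) ! t)) = (\<Prod>l<length w. real (\<Sum>t\<le>l. w ! t))"
    by (intro prod.cong refl arg_cong[where f = real] sum.cong) (auto simp: nth_append)
  have total: "(\<Sum>t\<le>length w. (w @ [a]) ! t) = a + sum_list w"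
    by (simp add: nth_append sum_list_sum_nth atLeast0LessThan lessThan_Suc_atMost[symmetric])
  show ?thesis
    unfolding wcoef_def length_append_singleton prod.lessThan_Suc prefixes total by simp
qed

lemma wcoef_eq_inv_suffix_sums_rev: "wcoef w = inv_suffix_sums (rev w)"
  by (induction w rule: rev_induct) (simp add: wcoef_def, simp add: wcoef_snoc sum_list_rev)

lemma wcoef_multiplicative: "shuffle_multiplicative {0<..} wcoef"
  using rev_multiplicative[OF inv_suffix_sums_multiplicative]
  by (simp add: wcoef_eq_inv_suffix_sums_rev[abs_def])

section \<open>Shuffle permutations\<close>

lemma sorted_wrt_filter_iff_nth:
  "sorted_wrt R (filter P zs) \<longleftrightarrow>
     (\<forall>i j. i < j \<longrightarrow> j < length zs \<longrightarrow> P (zs ! i) \<longrightarrow> P (zs ! j) \<longrightarrow> R (zs ! i) (zs ! j))"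
  by (induction zs) (auto simp add: in_set_conv_nth Ball_def nth_Cons split: nat.split)

lemma filter_eq_upt_iff_sorted:
  assumes "distinct zs" "set (filter P zs) = {a..<b}"
  shows "filter P zs = [a..<b] \<longleftrightarrow> sorted_wrt (<) (filter P zs)"
  using assms by (auto simp: strict_sorted_iff intro: sorted_distinct_set_unique)

lemma shuffles_perm_iff:
  "\<sigma> \<in> shuffles_perm n m \<longleftrightarrow>
     \<sigma> permutes {0..<n + m} \<and> map \<sigma> [0..<n + m] \<in> shuffles [0..<n] [n..<n + m]"
proof (cases "\<sigma> permutes {0..<n + m}")
  case True
  let ?zs = "map \<sigma> [0..<n + m]"
  have "distinct ?zs" "set ?zs = {0..<n + m}"
    using True by (auto simp: distinct_map permutes_inj_on permutes_image)
  then have low: "filter (\<lambda>x. x < n) ?zs = [0..<n] \<longleftrightarrow> sorted_wrt (<) (filter (\<lambda>x. x < n) ?zs)"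
    and high: "filter (\<lambda>x. \<not> x < n) ?zs = [n..<n + m] \<longleftrightarrow> sorted_wrt (<) (filter (\<lambda>x. \<not> x < n) ?zs)"
    by (intro filter_eq_upt_iff_sorted; force)+
  have "?zs \<in> shuffles [0..<n] [n..<n + m] \<longleftrightarrow>
      filter (\<lambda>x. x < n) ?zs = [0..<n] \<and> filter (\<lambda>x. \<not> x < n) ?zs = [n..<n + m]"
    by (subst inv_image_partition[of "[0..<n]" "\<lambda>x. x < n", symmetric]) (auto simp: o_def)
  then show ?thesis
    using True unfolding low high sorted_wrt_filter_iff_nth shuffles_perm_def
    by (auto simp: not_less)
qed (simp add: shuffles_perm_def)

lemma sum_shuffles_perm_eq_sum_shuffles:
  assumes "length w = n + m"
  shows "(\<Sum>\<sigma>\<in>shuffles_perm n m. F (permute_word \<sigma> w)) =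
    (\<Sum>z\<in>shuffles [0..<n] [n..<n + m]. F (map ((!) w) z))"
proof (rule sum.reindex_bij_witness[where j = "\<lambda>\<sigma>. map \<sigma> [0..<n + m]"
      and i = "\<lambda>z p. if p < n + m then z ! p else p"])
  fix \<sigma> assume "\<sigma> \<in> shuffles_perm n m"
  then have perm: "\<sigma> permutes {0..<n + m}"
    and shuffle: "map \<sigma> [0..<n + m] \<in> shuffles [0..<n] [n..<n + m]"
    by (simp_all only: shuffles_perm_iff)
  show "(\<lambda>p. if p < n + m then map \<sigma> [0..<n + m] ! p else p) = \<sigma>"
  proof
    fix p
    show "(if p < n + m then map \<sigma> [0..<n + m] ! p else p) = \<sigma> p"
      using permutes_not_in[OF perm, of p] by simp
  qed
  show "map \<sigma> [0..<n + m] \<in> shuffles [0..<n] [n..<n + m]" by (fact shuffle)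
  show "F (map ((!) w) (map \<sigma> [0..<n + m])) = F (permute_word \<sigma> w)"
    by (simp add: permute_word_def assms o_def)
next
  fix z assume z: "z \<in> shuffles [0..<n] [n..<n + m]"
  have len: "length z = n + m" using length_shuffles[OF z] by simp
  show map_z: "map (\<lambda>p. if p < n + m then z ! p else p) [0..<n + m] = z"
    by (rule nth_equalityI) (simp_all add: len)
  have "distinct z" by (rule distinct_disjoint_shuffles[OF _ _ _ z]) auto
  moreover have "set z = {0..<n + m}" using z by (simp add: set_shuffles ivl_disj_un_two)
  ultimately have "bij_betw ((!) z) {0..<n + m} {0..<n + m}"
    by (intro bij_betw_nth) (simp_all add: len atLeast0LessThan)
  then have "(\<lambda>p. if p < n + m then z ! p else p) permutes {0..<n + m}"
    by (intro bij_imp_permutes) (auto intro: bij_betw_cong[THEN iffD1])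
  then show "(\<lambda>p. if p < n + m then z ! p else p) \<in> shuffles_perm n m"
    using z unfolding shuffles_perm_iff map_z by blast
qed

lemma sum_shuffles_perm_eq_shuffle_sum:
  "(\<Sum>\<sigma>\<in>shuffles_perm (length xs) (length ys). F (permute_word \<sigma> (xs @ ys))) = shuffle_sum F xs ys"
  by (simp add: sum_shuffles_perm_eq_sum_shuffles shuffle_sum_eq_sum_index_shuffles)

lemma shuffle_multiplicative_shuffles_perm:
  assumes "shuffle_multiplicative A F" "set xs \<subseteq> A" "set ys \<subseteq> A"
  shows "F xs * F ys = (\<Sum>\<sigma>\<in>shuffles_perm (length xs) (length ys). F (permute_word \<sigma> (xs @ ys)))"
  using assms by (simp add: shuffle_multiplicative_def sum_shuffles_perm_eq_shuffle_sum)

theorem mainTheorem5: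
  fixes b c :: "nat \<Rightarrow> real" and s :: nat and xs ys :: "nat list"
  assumes "xs \<noteq> []" and "ys \<noteq> []"
    and "\<forall>x\<in>set xs. 0 < x" and "\<forall>y\<in>set ys. 0 < y"
  shows "vpoly b c s xs * vpoly b c s ys =
           (\<Sum>\<sigma>\<in>shuffles_perm (length xs) (length ys). vpoly b c s (permute_word \<sigma> (xs @ ys)))
       \<and> wcoef xs * wcoef ys =
           (\<Sum>\<sigma>\<in>shuffles_perm (length xs) (length ys). wcoef (permute_word \<sigma> (xs @ ys)))"
proof -
  have "set xs \<subseteq> {0<..}" "set ys \<subseteq> {0<..}" using assms(3,4) by auto
  then show ?thesis
    using shuffle_multiplicative_shuffles_perm[OF vpoly_multiplicative]
      shuffle_multiplicative_shuffles_perm[OF wcoef_multiplicative]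
    by simp
qed

end
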